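(* Let $E=[n]$, let $f:2^E\to\mathbb{Z}_{\ge 0}$ be a nonnegative integer-valued submodular function with $M:=\|f\|_\infty=\max_{S\subseteq E}|f(S)|<\infty$, let $F$ be its Lovász extension, and let $d\in\mathbb{Z}^n$ be a nonzero vector. For $R>0$ define \[ \Phi(x)=F(x)+g_R(x),\qquad g_R(x):=R\,|1-d^\top x|,\qquad x\in\mathbb{R}^n. \] If $R>M$, then every minimizer $x^\star$ of $\Phi$ over $\mathbb{R}^n$ satisfies $d^\top x^\star=1$. In particular, for such $R$ the constrained problem $\min\{F(x): x\in\mathbb{R}^n,\ d^\top x=1\}$ is equivalent to the unconstrained problem $\min_{x\in\mathbb{R}^n}\Phi(x)$.
   Context: For $x\in\mathbb{R}^n$ and $S\subseteq E$ write $x(S)=\sum_{i\in S}x_i$. The base polytope of $f$ is $B(f)=\{x\in\mathbb{R}^n: x(S)\le f(S)\ \forall S\subseteq E,\ x(E)=f(E)\}$. The Lovász extension of $f$ is $F(x)=\max_{v\in B(f)}v^\top x$; equivalently $F(x)=\sum_{i=1}^n x_{\pi_i}(f(S_i)-f(S_{i-1}))$, where $\pi$ is a permutation with $x_{\pi_1}\ge\cdots\ge x_{\pi_n}$ (ties broken lexicographically), $S_i=\{\pi_1,\dots,\pi_i\}$ and $S_0=\emptyset$. *)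

theory Defs
  imports Main "HOL-Analysis.Analysis"
begin

text \<open>Ground set E is the finite type 'n (E = UNIV); vectors in R^E are functions 'n \<Rightarrow> real.\<close>

definition submodular :: "('n::finite set \<Rightarrow> real) \<Rightarrow> bool" where
  "submodular f \<longleftrightarrow> (\<forall>S T. f (S \<union> T) + f (S \<inter> T) \<le> f S + f T)"

definition base_polytope :: "('n::finite set \<Rightarrow> real) \<Rightarrow> ('n \<Rightarrow> real) set" where
  "base_polytope f = {x. (\<forall>S. sum x S \<le> f S) \<and> sum x UNIV = f UNIV}"

definition lovasz_ext :: "('n::finite set \<Rightarrow> real) \<Rightarrow> ('n \<Rightarrow> real) \<Rightarrow> real" where
  "lovasz_ext f x = Sup ((\<lambda>v. \<Sum>i\<in>UNIV. v i * x i) ` base_polytope f)"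

end

theory Submission
  imports Defs
begin

text \<open>Adding \<open>h\<close> to \<open>x\<close> changes each linear functional \<open>v\<close> of the base polytope by \<open>v \<bullet> h\<close>,
  and for nonnegative \<open>f\<close> bounded by \<open>M\<close> every coordinate of \<open>v\<close> lies in \<open>[-M, M]\<close>; hence the Lovasz
  extension is \<open>M\<close>-Lipschitz for the \<open>\<ell>\<^sub>1\<close> norm. Since \<open>d\<close> is a nonzero integer vector, moving one
  coordinate of \<open>y\<close> reaches the hyperplane \<open>d\<^sup>T x = 1\<close> at \<open>\<ell>\<^sub>1\<close> distance at most \<open>|1 - d\<^sup>T y|\<close>.
  So \<open>F\<close> at the projected point is at most \<open>F y + M |1 - d\<^sup>T y|\<close>, and a penalty weight \<open>R > M\<close>
  makes leaving the hyperplane strictly unprofitable.\<close>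

lemma base_polytope_abs_le:
  fixes f :: "'n::finite set \<Rightarrow> real"
  assumes nonneg: "\<forall>S. f S \<ge> 0" and bound: "\<forall>S. \<bar>f S\<bar> \<le> M"
    and v: "v \<in> base_polytope f"
  shows "\<bar>v i\<bar> \<le> M"
proof -
  have le: "\<forall>S. sum v S \<le> f S" and total: "sum v UNIV = f UNIV"
    using v by (auto simp: base_polytope_def)
  have "v i \<le> f {i}" using le[rule_format, of "{i}"] by simp
  moreover have "sum v UNIV = v i + sum v (UNIV - {i})" by (simp add: sum.remove)
  moreover have "sum v (UNIV - {i}) \<le> f (UNIV - {i})" using le by blast
  ultimately show ?thesis
    using bound[rule_format, of "{i}"] bound[rule_format, of "UNIV - {i}"] nonneg total
    by (smt (verit))
qed

lemma sum_mult_le_l1_norm: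
  fixes v h :: "'a \<Rightarrow> real"
  assumes "\<forall>j\<in>A. \<bar>v j\<bar> \<le> M"
  shows "(\<Sum>j\<in>A. v j * h j) \<le> M * (\<Sum>j\<in>A. \<bar>h j\<bar>)"
proof -
  have "v j * h j \<le> M * \<bar>h j\<bar>" if "j \<in> A" for j
  proof -
    have "v j * h j \<le> \<bar>v j\<bar> * \<bar>h j\<bar>" by (metis abs_ge_self abs_mult)
    also have "\<dots> \<le> M * \<bar>h j\<bar>" using assms that by (simp add: mult_right_mono)
    finally show ?thesis .
  qed
  then show ?thesis by (simp add: sum_mono sum_distrib_left)
qed

lemma lovasz_ext_add_le:
  fixes f :: "'n::finite set \<Rightarrow> real"
  assumes nonneg: "\<forall>S. f S \<ge> 0" and bound: "\<forall>S. \<bar>f S\<bar> \<le> M"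
  shows "lovasz_ext f (\<lambda>j. x j + h j) \<le> lovasz_ext f x + M * (\<Sum>j\<in>UNIV. \<bar>h j\<bar>)"
proof (cases "base_polytope f = {}")
  case True
  have "M \<ge> 0" using bound by (meson abs_ge_zero order_trans)
  then show ?thesis using True by (simp add: lovasz_ext_def)
next
  case False
  have coord: "\<forall>j\<in>UNIV. \<bar>v j\<bar> \<le> M" if "v \<in> base_polytope f" for v
    using base_polytope_abs_le[OF nonneg bound that] by blast
  let ?A = "(\<lambda>v. \<Sum>j\<in>UNIV. v j * x j) ` base_polytope f"
  have bdd: "bdd_above ?A"
    by (rule bdd_aboveI2[where M = "M * (\<Sum>j\<in>UNIV. \<bar>x j\<bar>)"])
       (rule sum_mult_le_l1_norm[OF coord])
  show ?thesis unfolding lovasz_ext_def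
  proof (rule cSup_least)
    fix z assume "z \<in> (\<lambda>v. \<Sum>j\<in>UNIV. v j * (x j + h j)) ` base_polytope f"
    then obtain v where v: "v \<in> base_polytope f" and z: "z = (\<Sum>j\<in>UNIV. v j * (x j + h j))"
      by blast
    have "z = (\<Sum>j\<in>UNIV. v j * x j) + (\<Sum>j\<in>UNIV. v j * h j)"
      by (simp add: z distrib_left sum.distrib)
    also have "\<dots> \<le> Sup ?A + M * (\<Sum>j\<in>UNIV. \<bar>h j\<bar>)"
      using bdd v sum_mult_le_l1_norm[OF coord[OF v]] by (intro add_mono cSup_upper) auto
    finally show "z \<le> Sup ?A + M * (\<Sum>j\<in>UNIV. \<bar>h j\<bar>)" .
  qed (use False in simp)
qed

lemma exists_hyperplane_point_l1_near:
  fixes d :: "'n::finite \<Rightarrow> int" and y :: "'n \<Rightarrow> real"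
  assumes "d \<noteq> (\<lambda>_. 0)"
  shows "\<exists>y'. (\<Sum>j\<in>UNIV. real_of_int (d j) * y' j) = 1 \<and>
              (\<Sum>j\<in>UNIV. \<bar>y' j - y j\<bar>) \<le> \<bar>1 - (\<Sum>j\<in>UNIV. real_of_int (d j) * y j)\<bar>"
proof -
  define D where "D = (\<lambda>x::'n \<Rightarrow> real. \<Sum>j\<in>UNIV. real_of_int (d j) * x j)"
  obtain i where di: "d i \<noteq> 0" using assms by auto
  then have di1: "\<bar>real_of_int (d i)\<bar> \<ge> 1" by linarith
  define s where "s = (1 - D y) / real_of_int (d i)"
  define y' where "y' = (\<lambda>j. y j + (if j = i then s else 0))"
  have "D y' = (\<Sum>j\<in>UNIV. real_of_int (d j) * y j + (if j = i then real_of_int (d j) * s else 0))"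
    unfolding D_def y'_def by (intro sum.cong) (auto simp: distrib_left)
  also have "\<dots> = D y + real_of_int (d i) * s" by (simp add: D_def sum.distrib)
  finally have "D y' = D y + real_of_int (d i) * s" .
  then have "D y' = 1" using di by (simp add: s_def)
  have "(\<Sum>j\<in>UNIV. \<bar>y' j - y j\<bar>) = (\<Sum>j\<in>UNIV. if j = i then \<bar>s\<bar> else 0)"
    unfolding y'_def by (intro sum.cong) auto
  also have "\<dots> = \<bar>s\<bar>" by simp
  also have "\<dots> = \<bar>1 - D y\<bar> / \<bar>real_of_int (d i)\<bar>" by (simp add: s_def abs_divide)
  also have "\<dots> \<le> \<bar>1 - D y\<bar>"
    using divide_left_mono[OF di1, of "\<bar>1 - D y\<bar>"] di1 by simp
  finally show ?thesis using \<open>D y' = 1\<close> unfolding D_def by blast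
qed

lemma exists_hyperplane_point_lovasz_ext_le:
  fixes f :: "'n::finite set \<Rightarrow> real" and d :: "'n \<Rightarrow> int"
  assumes nonneg: "\<forall>S. f S \<ge> 0" and bound: "\<forall>S. \<bar>f S\<bar> \<le> M" and "d \<noteq> (\<lambda>_. 0)"
  shows "\<exists>y'. (\<Sum>j\<in>UNIV. real_of_int (d j) * y' j) = 1 \<and>
              lovasz_ext f y' \<le> lovasz_ext f y + M * \<bar>1 - (\<Sum>j\<in>UNIV. real_of_int (d j) * y j)\<bar>"
proof -
  obtain y' where y': "(\<Sum>j\<in>UNIV. real_of_int (d j) * y' j) = 1"
    and dist: "(\<Sum>j\<in>UNIV. \<bar>y' j - y j\<bar>) \<le> \<bar>1 - (\<Sum>j\<in>UNIV. real_of_int (d j) * y j)\<bar>"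
    using exists_hyperplane_point_l1_near[OF \<open>d \<noteq> (\<lambda>_. 0)\<close>] by blast
  have "M \<ge> 0" using bound by (meson abs_ge_zero order_trans)
  have "lovasz_ext f y' = lovasz_ext f (\<lambda>j. y j + (y' j - y j))" by simp
  also have "\<dots> \<le> lovasz_ext f y + M * (\<Sum>j\<in>UNIV. \<bar>y' j - y j\<bar>)"
    by (rule lovasz_ext_add_le[OF nonneg bound])
  also have "\<dots> \<le> lovasz_ext f y + M * \<bar>1 - (\<Sum>j\<in>UNIV. real_of_int (d j) * y j)\<bar>"
    using dist \<open>M \<ge> 0\<close> by (simp add: mult_left_mono)
  finally show ?thesis using y' by blast
qed

lemma exact_penalty_minimizer_feasible:
  fixes F D :: "'a \<Rightarrow> real"
  assumes near: "\<And>y. \<exists>y'. D y' = 1 \<and> F y' \<le> F y + M * \<bar>1 - D y\<bar>"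
    and "R > M"
    and min: "\<forall>y. F x + R * \<bar>1 - D x\<bar> \<le> F y + R * \<bar>1 - D y\<bar>"
  shows "D x = 1"
proof (rule ccontr)
  assume "D x \<noteq> 1"
  then have "M * \<bar>1 - D x\<bar> < R * \<bar>1 - D x\<bar>" using \<open>R > M\<close> by simp
  moreover obtain y' where "D y' = 1" "F y' \<le> F x + M * \<bar>1 - D x\<bar>" using near by blast
  ultimately show False using min[rule_format, of y'] by simp
qed

lemma exact_penalty_minimizer_iff:
  fixes F D :: "'a \<Rightarrow> real"
  assumes near: "\<And>y. \<exists>y'. D y' = 1 \<and> F y' \<le> F y + M * \<bar>1 - D y\<bar>"
    and "R > M"
  shows "(\<forall>y. F x + R * \<bar>1 - D x\<bar> \<le> F y + R * \<bar>1 - D y\<bar>) \<longleftrightarrow>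
         D x = 1 \<and> (\<forall>y. D y = 1 \<longrightarrow> F x \<le> F y)"
proof
  assume min: "\<forall>y. F x + R * \<bar>1 - D x\<bar> \<le> F y + R * \<bar>1 - D y\<bar>"
  then have "D x = 1" by (rule exact_penalty_minimizer_feasible[OF near \<open>R > M\<close>])
  moreover have "F x \<le> F y" if "D y = 1" for y
    using min[rule_format, of y] \<open>D x = 1\<close> that by simp
  ultimately show "D x = 1 \<and> (\<forall>y. D y = 1 \<longrightarrow> F x \<le> F y)" by blast
next
  assume feasible_min: "D x = 1 \<and> (\<forall>y. D y = 1 \<longrightarrow> F x \<le> F y)"
  show "\<forall>y. F x + R * \<bar>1 - D x\<bar> \<le> F y + R * \<bar>1 - D y\<bar>"
  proof
    fix y
    obtain y' where "D y' = 1" "F y' \<le> F y + M * \<bar>1 - D y\<bar>" using near by blast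
    moreover have "M * \<bar>1 - D y\<bar> \<le> R * \<bar>1 - D y\<bar>" using \<open>R > M\<close> by (simp add: mult_right_mono)
    ultimately show "F x + R * \<bar>1 - D x\<bar> \<le> F y + R * \<bar>1 - D y\<bar>" using feasible_min by force
  qed
qed

theorem lemma2:
  fixes f :: "'n::finite set \<Rightarrow> int" and d :: "'n \<Rightarrow> int" and R :: real
  assumes nonneg: "\<forall>S. f S \<ge> 0"
    and sub: "submodular (\<lambda>S. real_of_int (f S))"
    and dnz: "d \<noteq> (\<lambda>_. 0)"
    and R_gt: "R > real_of_int (Max (range (\<lambda>S. \<bar>f S\<bar>)))"
  defines "\<Phi> \<equiv> (\<lambda>x. lovasz_ext (\<lambda>S. real_of_int (f S)) x + R * \<bar>1 - (\<Sum>i\<in>UNIV. real_of_int (d i) * x i)\<bar>)"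
  shows "(\<forall>x. (\<forall>y. \<Phi> x \<le> \<Phi> y) \<longrightarrow> (\<Sum>i\<in>UNIV. real_of_int (d i) * x i) = 1)
       \<and> (\<forall>x. (\<forall>y. \<Phi> x \<le> \<Phi> y) \<longleftrightarrow>
              ((\<Sum>i\<in>UNIV. real_of_int (d i) * x i) = 1 \<and>
               (\<forall>y. (\<Sum>i\<in>UNIV. real_of_int (d i) * y i) = 1 \<longrightarrow> lovasz_ext (\<lambda>S. real_of_int (f S)) x \<le> lovasz_ext (\<lambda>S. real_of_int (f S)) y)))"
proof -
  define M where "M = real_of_int (Max (range (\<lambda>S. \<bar>f S\<bar>)))"
  define F where "F = lovasz_ext (\<lambda>S. real_of_int (f S))"
  define D where "D = (\<lambda>x::'n \<Rightarrow> real. \<Sum>i\<in>UNIV. real_of_int (d i) * x i)"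
  have "\<bar>f S\<bar> \<le> Max (range (\<lambda>S. \<bar>f S\<bar>))" for S by (rule Max_ge) auto
  then have bound: "\<forall>S. \<bar>real_of_int (f S)\<bar> \<le> M" unfolding M_def by (simp flip: of_int_abs)
  have near: "\<exists>y'. D y' = 1 \<and> F y' \<le> F y + M * \<bar>1 - D y\<bar>" for y
    unfolding F_def D_def using nonneg bound dnz by (intro exists_hyperplane_point_lovasz_ext_le) auto
  have "R > M" using R_gt by (simp add: M_def)
  have "(\<forall>x. (\<forall>y. F x + R * \<bar>1 - D x\<bar> \<le> F y + R * \<bar>1 - D y\<bar>) \<longrightarrow> D x = 1) \<and>
        (\<forall>x. (\<forall>y. F x + R * \<bar>1 - D x\<bar> \<le> F y + R * \<bar>1 - D y\<bar>) \<longleftrightarrow>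
              D x = 1 \<and> (\<forall>y. D y = 1 \<longrightarrow> F x \<le> F y))"
    using exact_penalty_minimizer_feasible[OF near \<open>R > M\<close>]
      exact_penalty_minimizer_iff[OF near \<open>R > M\<close>] by blast
  then show ?thesis unfolding \<Phi>_def F_def D_def .
qed

end
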